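(* Let $1\le k\le n$ and let $Q_{n,k}(T)=\sum_{i=k}^n(-1)^{i-k}\binom{n}{i}T^i$ be the numerator polynomial of the standard graded Hilbert series of $M(n,k)$ (so $H_{M(n,k)}(T)=Q_{n,k}(T)/(1-T)^n$). Then for every integer $s\ge0$, as formal power series in $T$, $$\frac{Q_{n,k}(T)}{(1-T)^s}=\sum_{j=0}^\infty\left((-1)^j\binom{n-s}{k+j}+\sum_{t=1}^s\binom{n-t}{k-1}\binom{s-t+j}{s-t}\right)T^{j+k}$$ $$=\sum_{j=0}^\infty\left((-1)^j\binom{n-s}{k+j}+\sum_{\ell=0}^{k-1}\binom{j+\ell}{\ell}\binom{n-s-j-\ell-1}{k-\ell-1}\binom{s+j+\ell}{s-1}\right)T^{j+k}.$$
   Context: $M(n,k)$ is the $k$-th syzygy module of $K=R/(X_1,\dots,X_n)$, $R=K[X_1,\dots,X_n]$ with the standard grading, in the Koszul complex: the image of $\partial:\bigwedge^kR^n\to\bigwedge^{k-1}R^n$, where $e_{i_1}\wedge\dots\wedge e_{i_k}$ has degree $k$. Binomial coefficients $\binom{a}{b}$ are taken for integer $a$ and integer $b$ as $a(a-1)\cdots(a-b+1)/b!$ if $b\ge0$ and $0$ if $b<0$. *)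

theory Defs
  imports "HOL-Computational_Algebra.Formal_Power_Series"
begin

definition gbinom :: "int \<Rightarrow> int \<Rightarrow> rat" where
  "gbinom a b = (if b < 0 then 0 else (of_int a :: rat) gchoose (nat b))"

definition Qnk :: "nat \<Rightarrow> nat \<Rightarrow> rat fps" where
  "Qnk n k = (\<Sum>i=k..n. fps_const ((-1) ^ (i - k) * gbinom (int n) (int i)) * fps_X ^ i)"

end

theory Submission imports Defs begin

unbundle fps_syntax

text \<open>Let A_s be the first claimed series. By Pascal's rule the coefficients of A_s are the
  partial sums of those of A_(s-1), i.e. A_s (1 - T) = A_(s-1); together with A_0 = Q_(n,k) this
  gives the first formula by induction on s. For the second, expand
  binom(n-t, k-1) = sum_l binom(n-s-j-l-1, k-l-1) binom(s-t+j+l, l) (Vandermonde after negating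
  the upper indices), exchange the two sums and evaluate the sum over t by the hockey-stick identity.\<close>

lemma gbinom_of_nat: "gbinom (int a) (int b) = of_nat (a choose b)"
  by (simp add: gbinom_def binomial_gbinomial)

lemma gbinom_neg: "b < 0 \<Longrightarrow> gbinom a b = 0"
  by (simp add: gbinom_def)

lemma gbinom_Pascal:
  assumes "b \<ge> -1"
  shows "gbinom (a + 1) (b + 1) = gbinom a b + gbinom a (b + 1)"
proof (cases "b = -1")
  case True
  then show ?thesis by (simp add: gbinom_def)
next
  case False
  with assms have "nat (b + 1) = Suc (nat b)" by simp
  with False assms show ?thesis
    using gbinomial_Suc_Suc[of "of_int a :: rat" "nat b"] by (simp add: gbinom_def)
qed

lemma gbinomial_Vandermonde_shifted:
  fixes x :: "'a :: field_char_0"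
  shows "(\<Sum>l=0..r. ((x - of_nat l) gchoose (r - l)) * (of_nat (b + l) gchoose l))
         = (x + of_nat b + 1) gchoose r"
proof -
  have negate: "((x - of_nat l) gchoose (r - l)) * (of_nat (b + l) gchoose l)
      = (-1) ^ r * (((- of_nat b - 1) gchoose l) * ((of_nat r - x - 1) gchoose (r - l)))"
    if "l \<in> {0..r}" for l
  proof -
    from that have "l \<le> r" by simp
    then have "(x - of_nat l) gchoose (r - l) = (-1) ^ (r - l) * ((of_nat r - x - 1) gchoose (r - l))"
      using gbinomial_negated_upper[of "x - of_nat l" "r - l"] by (simp add: of_nat_diff algebra_simps)
    moreover have "of_nat (b + l) gchoose l = (-1) ^ l * ((- of_nat b - 1 :: 'a) gchoose l)"
      using gbinomial_negated_upper[of "of_nat (b + l) :: 'a" l] by (simp add: algebra_simps)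
    moreover have "(-1 :: 'a) ^ (r - l) * (-1) ^ l = (-1) ^ r"
      using \<open>l \<le> r\<close> by (simp flip: power_add)
    ultimately show ?thesis by (simp add: algebra_simps)
  qed
  have "(\<Sum>l=0..r. ((x - of_nat l) gchoose (r - l)) * (of_nat (b + l) gchoose l))
      = (-1) ^ r * (\<Sum>l=0..r. ((- of_nat b - 1) gchoose l) * ((of_nat r - x - 1) gchoose (r - l)))"
    unfolding sum_distrib_left by (rule sum.cong[OF refl negate])
  also have "\<dots> = (-1) ^ r * ((- of_nat b - 1 + (of_nat r - x - 1)) gchoose r)"
    by (simp only: gbinomial_Vandermonde)
  also have "\<dots> = (x + of_nat b + 1) gchoose r"
    using gbinomial_negated_upper[of "x + of_nat b + 1" r] by (simp add: algebra_simps)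
  finally show ?thesis .
qed

lemma gbinom_Vandermonde_shifted:
  "gbinom (a + int b + 1) (int k - 1)
     = (\<Sum>l<k. gbinom (a - int l) (int k - int l - 1) * of_nat ((b + l) choose l))"
proof (cases k)
  case 0
  then show ?thesis by (simp add: gbinom_neg)
next
  case (Suc r)
  have term_eq: "((of_int a - of_nat l) gchoose (r - l)) * (of_nat (b + l) gchoose l)
      = gbinom (a - int l) (int k - int l - 1) * of_nat ((b + l) choose l)"
    if "l \<in> {0..r}" for l
  proof -
    from that Suc have "nat (int k - int l - 1) = r - l" by auto
    with that Suc show ?thesis by (simp add: gbinom_def binomial_gbinomial)
  qed
  have "gbinom (a + int b + 1) (int k - 1) = (of_int a + of_nat b + 1 :: rat) gchoose r"
    using Suc by (simp add: gbinom_def)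
  also have "\<dots> = (\<Sum>l=0..r. ((of_int a - of_nat l) gchoose (r - l)) * (of_nat (b + l) gchoose l))"
    by (rule gbinomial_Vandermonde_shifted[symmetric])
  also have "\<dots> = (\<Sum>l=0..r. gbinom (a - int l) (int k - int l - 1) * of_nat ((b + l) choose l))"
    by (rule sum.cong[OF refl term_eq])
  also have "{0..r} = {..<k}"
    using Suc by auto
  finally show ?thesis .
qed

lemma choose_mult_swap:
  "((u + (j + l)) choose l) * ((u + j) choose u) = ((j + l) choose l) * ((u + (j + l)) choose u)"
proof -
  have "((u + j + l) choose (u + j)) * ((u + j) choose u)
      = ((u + j + l) choose u) * ((u + j + l - u) choose (u + j - u))"
    by (rule choose_mult) auto
  moreover have "(u + j + l) choose (u + j) = (u + j + l) choose l"
    using binomial_symmetric[of l "u + j + l"] by simp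
  moreover have "(j + l) choose j = (j + l) choose l"
    using binomial_symmetric[of l "j + l"] by simp
  ultimately show ?thesis by (simp add: add.commute add.left_commute mult.commute)
qed

lemma sum_choose_lower_reversed:
  assumes "s \<ge> 1"
  shows "(\<Sum>t=1..s. (s - t + m) choose (s - t)) = (s + m) choose (s - 1)"
proof -
  have "(\<Sum>t=1..s. (s - t + m) choose (s - t)) = (\<Sum>u\<le>s - 1. (m + u) choose u)"
    by (rule sum.reindex_bij_witness[where i="\<lambda>u. s - u" and j="\<lambda>t. s - t"])
       (use assms in \<open>auto simp: add.commute\<close>)
  also have "\<dots> = Suc (m + (s - 1)) choose (s - 1)"
    by (rule sum_choose_lower)
  finally show ?thesis
    using assms by (simp add: add.commute)
qed

lemma sum_over_t_eq_sum_over_l: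
  assumes "s \<ge> 1"
  shows "(\<Sum>t=1..s. gbinom (int n - int t) (int k - 1) * gbinom (int s - int t + int j) (int s - int t))
    = (\<Sum>l=0..<k. gbinom (int j + int l) (int l) * gbinom (int n - int s - int j - int l - 1) (int k - int l - 1)
                    * gbinom (int s + int j + int l) (int s - 1))"
proof -
  define G where "G l = gbinom (int n - int s - int j - int l - 1) (int k - int l - 1)" for l
  have expand: "gbinom (int n - int t) (int k - 1) * gbinom (int s - int t + int j) (int s - int t)
     = (\<Sum>l<k. G l * of_nat ((j + l) choose l) * of_nat ((s - t + (j + l)) choose (s - t)))"
    if "t \<in> {1..s}" for t
  proof -
    from that have "int (s - t + j) = int s - int t + int j" and "int (s - t) = int s - int t"
      by auto
    then have binom_t: "gbinom (int s - int t + int j) (int s - int t) = of_nat ((s - t + j) choose (s - t))"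
      using gbinom_of_nat[of "s - t + j" "s - t"] by (simp only:)
    have "gbinom (int n - int t) (int k - 1) = gbinom ((int n - int s - int j - 1) + int (s - t + j) + 1) (int k - 1)"
      using that by (simp add: of_nat_diff)
    also have "\<dots> = (\<Sum>l<k. gbinom ((int n - int s - int j - 1) - int l) (int k - int l - 1)
                          * of_nat ((s - t + j + l) choose l))"
      by (rule gbinom_Vandermonde_shifted)
    also have "\<dots> = (\<Sum>l<k. G l * of_nat ((s - t + j + l) choose l))"
      by (simp add: G_def algebra_simps)
    finally have "gbinom (int n - int t) (int k - 1) * gbinom (int s - int t + int j) (int s - int t)
       = (\<Sum>l<k. G l * (of_nat ((s - t + j + l) choose l) * of_nat ((s - t + j) choose (s - t))))"
      by (simp only: binom_t sum_distrib_right mult.assoc)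
    also have "\<dots> = (\<Sum>l<k. G l * of_nat ((j + l) choose l) * of_nat ((s - t + (j + l)) choose (s - t)))"
      by (intro sum.cong refl) (simp only: mult.assoc add.assoc choose_mult_swap flip: of_nat_mult)
    finally show ?thesis .
  qed
  have "(\<Sum>t=1..s. gbinom (int n - int t) (int k - 1) * gbinom (int s - int t + int j) (int s - int t))
     = (\<Sum>t=1..s. \<Sum>l<k. G l * of_nat ((j + l) choose l) * of_nat ((s - t + (j + l)) choose (s - t)))"
    by (rule sum.cong[OF refl expand])
  also have "\<dots> = (\<Sum>l<k. G l * of_nat ((j + l) choose l) * of_nat (\<Sum>t=1..s. (s - t + (j + l)) choose (s - t)))"
    by (subst sum.swap) (simp only: sum_distrib_left of_nat_sum)
  also have "\<dots> = (\<Sum>l<k. G l * of_nat ((j + l) choose l) * of_nat ((s + (j + l)) choose (s - 1)))"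
    by (simp only: sum_choose_lower_reversed[OF assms])
  also have "\<dots> = (\<Sum>l<k. gbinom (int j + int l) (int l) * G l * gbinom (int s + int j + int l) (int s - 1))"
  proof (intro sum.cong refl)
    fix l
    have "gbinom (int j + int l) (int l) = of_nat ((j + l) choose l)"
      using gbinom_of_nat[of "j + l" l] by simp
    moreover have "gbinom (int s + int j + int l) (int s - 1) = of_nat ((s + (j + l)) choose (s - 1))"
      using gbinom_of_nat[of "s + (j + l)" "s - 1"] assms by (simp add: of_nat_diff add.assoc)
    ultimately show "G l * of_nat ((j + l) choose l) * of_nat ((s + (j + l)) choose (s - 1))
        = gbinom (int j + int l) (int l) * G l * gbinom (int s + int j + int l) (int s - 1)"
      by (simp only: mult.commute)
  qed
  finally show ?thesis
    by (simp add: G_def atLeast0LessThan)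
qed

definition Qnk_quot_coeff :: "nat \<Rightarrow> nat \<Rightarrow> nat \<Rightarrow> nat \<Rightarrow> rat" where
  "Qnk_quot_coeff n k s j = (-1) ^ j * gbinom (int n - int s) (int k + int j)
     + (\<Sum>t=1..s. gbinom (int n - int t) (int k - 1) * gbinom (int s - int t + int j) (int s - int t))"

definition Qnk_quot :: "nat \<Rightarrow> nat \<Rightarrow> nat \<Rightarrow> rat fps" where
  "Qnk_quot n k s = Abs_fps (\<lambda>m. if m < k then 0 else Qnk_quot_coeff n k s (m - k))"

lemma Qnk_quot_coeff_Suc_diff:
  "Qnk_quot_coeff n k (Suc s) (Suc j) - Qnk_quot_coeff n k (Suc s) j = Qnk_quot_coeff n k s (Suc j)"
proof -
  have alternating: "(-1) ^ Suc j * gbinom (int n - int (Suc s)) (int k + int (Suc j))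
      - (-1) ^ j * gbinom (int n - int (Suc s)) (int k + int j)
      = (-1) ^ Suc j * gbinom (int n - int s) (int k + int (Suc j))"
    using gbinom_Pascal[of "int k + int j" "int n - int (Suc s)"] by (simp add: algebra_simps)
  have pascal_t: "gbinom (int (Suc s) - int t + int (Suc j)) (int (Suc s) - int t)
      - gbinom (int (Suc s) - int t + int j) (int (Suc s) - int t)
      = gbinom (int s - int t + int (Suc j)) (int s - int t)" if "t \<in> {1..Suc s}" for t
  proof -
    have "gbinom (int (Suc s) - int t + int (Suc j)) (int (Suc s) - int t)
        = gbinom ((int s - int t + int (Suc j)) + 1) ((int s - int t) + 1)"
      by (rule arg_cong2[where f = gbinom]) simp_all
    also have "\<dots> = gbinom (int s - int t + int (Suc j)) (int s - int t)
        + gbinom (int (Suc s) - int t + int j) (int (Suc s) - int t)"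
      using that by (subst gbinom_Pascal) (auto intro!: arg_cong2[where f = gbinom])
    finally show ?thesis by simp
  qed
  have "(\<Sum>t=1..Suc s. gbinom (int n - int t) (int k - 1) * gbinom (int (Suc s) - int t + int (Suc j)) (int (Suc s) - int t))
      - (\<Sum>t=1..Suc s. gbinom (int n - int t) (int k - 1) * gbinom (int (Suc s) - int t + int j) (int (Suc s) - int t))
      = (\<Sum>t=1..Suc s. gbinom (int n - int t) (int k - 1) * gbinom (int s - int t + int (Suc j)) (int s - int t))"
    unfolding sum_subtractf[symmetric] right_diff_distrib[symmetric]
    by (rule sum.cong[OF refl]) (metis pascal_t)
  also have "\<dots> = (\<Sum>t=1..s. gbinom (int n - int t) (int k - 1) * gbinom (int s - int t + int (Suc j)) (int s - int t))"
    by (simp add: gbinom_neg)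
  finally show ?thesis
    using alternating unfolding Qnk_quot_coeff_def by (simp add: algebra_simps)
qed

lemma Qnk_quot_coeff_Suc_0:
  assumes "k \<ge> 1"
  shows "Qnk_quot_coeff n k (Suc s) 0 = Qnk_quot_coeff n k s 0"
proof -
  have diagonal: "(\<Sum>t=1..s'. gbinom (int n - int t) (int k - 1) * gbinom (int s' - int t + int 0) (int s' - int t))
     = (\<Sum>t=1..s'. gbinom (int n - int t) (int k - 1))" for s'
  proof (rule sum.cong[OF refl])
    fix t assume "t \<in> {1..s'}"
    then have "gbinom (int s' - int t + int 0) (int s' - int t) = 1"
      using gbinom_of_nat[of "s' - t" "s' - t"] by (simp add: of_nat_diff)
    then show "gbinom (int n - int t) (int k - 1) * gbinom (int s' - int t + int 0) (int s' - int t)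
        = gbinom (int n - int t) (int k - 1)"
      by simp
  qed
  have "gbinom (int n - int s) (int k) = gbinom (int n - int (Suc s)) (int k - 1) + gbinom (int n - int (Suc s)) (int k)"
    using assms gbinom_Pascal[of "int k - 1" "int n - int (Suc s)"] by simp
  then show ?thesis
    unfolding Qnk_quot_coeff_def diagonal by simp
qed

lemma Qnk_quot_Suc_times_one_minus_X:
  assumes "k \<ge> 1"
  shows "Qnk_quot n k (Suc s) * (1 - fps_X) = Qnk_quot n k s"
proof (rule fps_ext)
  fix m
  have "Qnk_quot n k (Suc s) * (1 - fps_X) = Qnk_quot n k (Suc s) - fps_X * Qnk_quot n k (Suc s)"
    by (simp add: algebra_simps)
  then have coeff: "(Qnk_quot n k (Suc s) * (1 - fps_X)) $ m
      = Qnk_quot n k (Suc s) $ m - (if m = 0 then 0 else Qnk_quot n k (Suc s) $ (m - 1))"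
    by simp
  consider "m < k" | "m = k" | j where "m = k + Suc j"
    by (metis add_Suc_right less_imp_Suc_add linorder_neqE_nat)
  then show "(Qnk_quot n k (Suc s) * (1 - fps_X)) $ m = Qnk_quot n k s $ m"
  proof cases
    case 1
    then show ?thesis unfolding coeff by (simp add: Qnk_quot_def)
  next
    case 2
    then show ?thesis unfolding coeff using assms Qnk_quot_coeff_Suc_0[OF assms] by (simp add: Qnk_quot_def)
  next
    case (3 j)
    then show ?thesis unfolding coeff using Qnk_quot_coeff_Suc_diff[of n k s j] by (simp add: Qnk_quot_def)
  qed
qed

lemma Qnk_eq_Qnk_quot_0: "Qnk n k = Qnk_quot n k 0"
proof (rule fps_ext)
  fix m
  have "Qnk n k $ m = (\<Sum>i=k..n. if m = i then (-1) ^ (i - k) * gbinom (int n) (int i) else 0)"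
    unfolding Qnk_def fps_sum_nth by (intro sum.cong) (auto simp: fps_X_power_nth)
  also have "\<dots> = Qnk_quot n k 0 $ m"
    by (auto simp: Qnk_quot_def Qnk_quot_coeff_def gbinom_of_nat)
  finally show "Qnk n k $ m = Qnk_quot n k 0 $ m" .
qed

lemma Qnk_eq_Qnk_quot_times:
  assumes "k \<ge> 1"
  shows "Qnk n k = Qnk_quot n k s * (1 - fps_X) ^ s"
proof (induction s)
  case 0
  then show ?case by (simp add: Qnk_eq_Qnk_quot_0)
next
  case (Suc s)
  then show ?case
    using Qnk_quot_Suc_times_one_minus_X[OF assms, of n s] by (simp add: mult.assoc)
qed

lemma Qnk_divide_one_minus_X_power:
  assumes "k \<ge> 1"
  shows "Qnk n k / (1 - fps_X) ^ s = Qnk_quot n k s"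
proof -
  have "(1 - fps_X :: rat fps) ^ s $ 0 = 1"
    by (simp add: fps_nth_power_0)
  then have "(1 - fps_X :: rat fps) ^ s \<noteq> 0"
    by auto
  then show ?thesis
    using Qnk_eq_Qnk_quot_times[OF assms, of n s] by simp
qed

theorem proposition3p7:
  fixes n k s :: nat
  assumes "1 \<le> k" and "k \<le> n"
  shows "Qnk n k / (1 - fps_X) ^ s =
           Abs_fps (\<lambda>m. if m < k then 0 else
             (-1) ^ (m - k) * gbinom (int n - int s) (int k + int (m - k))
             + (\<Sum>t=1..s. gbinom (int n - int t) (int k - 1)
                           * gbinom (int s - int t + int (m - k)) (int s - int t)))
       \<and> Qnk n k / (1 - fps_X) ^ s =
           Abs_fps (\<lambda>m. if m < k then 0 else
             (-1) ^ (m - k) * gbinom (int n - int s) (int k + int (m - k))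
             + (\<Sum>l=0..<k. gbinom (int (m - k) + int l) (int l)
                           * gbinom (int n - int s - int (m - k) - int l - 1) (int k - int l - 1)
                           * gbinom (int s + int (m - k) + int l) (int s - 1)))"
proof -
  have sums_eq: "(\<Sum>t=1..s. gbinom (int n - int t) (int k - 1) * gbinom (int s - int t + int j) (int s - int t))
    = (\<Sum>l=0..<k. gbinom (int j + int l) (int l) * gbinom (int n - int s - int j - int l - 1) (int k - int l - 1)
                    * gbinom (int s + int j + int l) (int s - 1))" for j
  proof (cases "s = 0")
    case True
    then show ?thesis by (simp add: gbinom_neg)
  next
    case False
    then show ?thesis by (intro sum_over_t_eq_sum_over_l) simp
  qed
  have "Qnk n k / (1 - fps_X) ^ s =
           Abs_fps (\<lambda>m. if m < k then 0 else
             (-1) ^ (m - k) * gbinom (int n - int s) (int k + int (m - k))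
             + (\<Sum>t=1..s. gbinom (int n - int t) (int k - 1)
                           * gbinom (int s - int t + int (m - k)) (int s - int t)))"
    unfolding Qnk_divide_one_minus_X_power[OF assms(1)] Qnk_quot_def Qnk_quot_coeff_def ..
  then show ?thesis
    unfolding sums_eq by simp
qed

end
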